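(* Let $\mathcal{X}\subset\mathbb{R}^n$ be closed and convex, $\Xi\subset\mathbb{R}^m$ closed and convex, $\beta\in(0,1)$, $\varphi:\mathcal{X}\times\mathcal{X}\times\Xi\to\mathbb{R}$ bounded and continuous, and $\mathcal{Y}:\mathcal{X}\times\Xi\rightrightarrows\mathcal{X}$ nonempty-valued, compact-valued and continuous. Let $\xi_1,\ldots,\xi_N\in\Xi$ and $\mu_N=\frac1N\sum_{i=1}^N\xi_i$. Let $\mathcal{P}$ be a set of probability distributions on $\Xi$ such that $\mathbb{E}_Q[\boldsymbol{\xi}]=\mu_N$ for every $Q\in\mathcal{P}$ and the point mass $\delta_{\mu_N}\in\mathcal{P}$. If the MPC Bellman operator $B_{\mathrm{M}}$ is convexity preserving, then the DOO functional equation $$v_{\mathrm{O}}(x,\xi)=\inf_{y\in\mathcal{Y}(x,\xi)}\Bigl\{\varphi(x,y,\xi)+\beta\inf_{Q\in\mathcal{P}}\mathbb{E}_Q[v_{\mathrm{O}}(y,\boldsymbol{\xi})]\Bigr\}\quad\forall(x,\xi)\in\mathcal{X}\times\Xi$$ has a solution which is the same as the (unique bounded continuous) solution $v_{\mathrm{M}}$ of the MPC functional equation $$v_{\mathrm{M}}(x,\xi)=\inf_{y\in\mathcal{Y}(x,\xi)}\bigl\{\varphi(x,y,\xi)+\beta v_{\mathrm{M}}(y,\mu_N)\bigr\}\quad\forall(x,\xi)\in\mathcal{X}\times\Xi.$$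
   Context: $C_b(\mathcal{X}\times\Xi)$ denotes the Banach space of bounded continuous real-valued functions on $\mathcal{X}\times\Xi$ with the sup norm. The MPC Bellman operator $B_{\mathrm{M}}:C_b(\mathcal{X}\times\Xi)\to C_b(\mathcal{X}\times\Xi)$ is $B_{\mathrm{M}}(f)(x,\xi)=\inf_{y\in\mathcal{Y}(x,\xi)}\{\varphi(x,y,\xi)+\beta f(y,\mu_N)\}$. $B_{\mathrm{M}}$ is called convexity preserving if there exists a closed subset $\mathcal{F}\subset C_b(\mathcal{X}\times\Xi)$ such that $\xi\mapsto f(x,\xi)$ is convex for every $x\in\mathcal{X}$ and $f\in\mathcal{F}$, and $B_{\mathrm{M}}(\mathcal{F})\subset\mathcal{F}$. *)

theory Defs
  imports "HOL-Probability.Probability"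
begin

text \<open>Bounded continuous real functions on a set D, represented canonically
  by functions on the whole type that vanish outside D.\<close>
definition Cb :: "('p::metric_space) set \<Rightarrow> ('p \<Rightarrow> real) set" where
  "Cb D = {f. continuous_on D f \<and> bounded (f ` D) \<and> (\<forall>p. p \<notin> D \<longrightarrow> f p = 0)}"

definition closed_Cb :: "('p::metric_space) set \<Rightarrow> ('p \<Rightarrow> real) set \<Rightarrow> bool" where
  "closed_Cb D F \<longleftrightarrow> F \<subseteq> Cb D \<and>
     (\<forall>fs g. (\<forall>k. fs k \<in> F) \<and> g \<in> Cb D \<and> uniform_limit D fs g sequentially \<longrightarrow> g \<in> F)"

definition uhc_on :: "('p::metric_space) set \<Rightarrow> ('p \<Rightarrow> 'q::topological_space set) \<Rightarrow> bool" where
  "uhc_on D Y \<longleftrightarrow> (\<forall>p\<in>D. \<forall>U. open U \<and> Y p \<subseteq> U \<longrightarrow>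
      (\<exists>e>0. \<forall>q\<in>D. dist q p < e \<longrightarrow> Y q \<subseteq> U))"

definition lhc_on :: "('p::metric_space) set \<Rightarrow> ('p \<Rightarrow> 'q::topological_space set) \<Rightarrow> bool" where
  "lhc_on D Y \<longleftrightarrow> (\<forall>p\<in>D. \<forall>U. open U \<and> Y p \<inter> U \<noteq> {} \<longrightarrow>
      (\<exists>e>0. \<forall>q\<in>D. dist q p < e \<longrightarrow> Y q \<inter> U \<noteq> {}))"

definition continuous_corr_on :: "('p::metric_space) set \<Rightarrow> ('p \<Rightarrow> 'q::topological_space set) \<Rightarrow> bool" where
  "continuous_corr_on D Y \<longleftrightarrow> uhc_on D Y \<and> lhc_on D Y"

definition B_M :: "'a set \<Rightarrow> 'b set \<Rightarrow> ('a \<times> 'b \<Rightarrow> 'a set) \<Rightarrow> ('a \<times> 'a \<times> 'b \<Rightarrow> real)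
    \<Rightarrow> real \<Rightarrow> 'b \<Rightarrow> ('a \<times> 'b \<Rightarrow> real) \<Rightarrow> ('a \<times> 'b \<Rightarrow> real)" where
  "B_M X \<Xi> Y \<phi> \<beta> \<mu> f = (\<lambda>(x, \<xi>). if x \<in> X \<and> \<xi> \<in> \<Xi>
      then (INF y\<in>Y (x, \<xi>). \<phi> (x, y, \<xi>) + \<beta> * f (y, \<mu>)) else 0)"

definition convexity_preserving ::
  "('a::metric_space) set \<Rightarrow> ('b::real_normed_vector) set \<Rightarrow> ('a \<times> 'b \<Rightarrow> 'a set) \<Rightarrow> ('a \<times> 'a \<times> 'b \<Rightarrow> real)
    \<Rightarrow> real \<Rightarrow> 'b \<Rightarrow> bool" where
  "convexity_preserving X \<Xi> Y \<phi> \<beta> \<mu> \<longleftrightarrow>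
     (\<exists>F. F \<noteq> {} \<and> F \<subseteq> Cb (X \<times> \<Xi>) \<and> closed_Cb (X \<times> \<Xi>) F \<and>
        (\<forall>f\<in>F. \<forall>x\<in>X. convex_on \<Xi> (\<lambda>\<xi>. f (x, \<xi>))) \<and>
        B_M X \<Xi> Y \<phi> \<beta> \<mu> ` F \<subseteq> F)"

end

theory Submission
  imports Defs
begin

text \<open>
  The MPC Bellman operator is a \<open>\<beta>\<close>-contraction for the sup norm, so its iterates, started
  anywhere in the invariant closed set \<open>F\<close>, converge uniformly to its unique bounded fixed
  point \<open>v\<^sub>M\<close>; as \<open>F\<close> is closed, \<open>v\<^sub>M \<in> F\<close>, hence \<open>v\<^sub>M(y, \<cdot>)\<close> is convex. By Jensen's
  inequality every \<open>Q \<in> \<P>\<close>, whose mean is \<open>\<mu>\<^sub>N\<close>, gives \<open>E\<^sub>Q v\<^sub>M(y, \<xi>) \<ge> v\<^sub>M(y, \<mu>\<^sub>N)\<close>, with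
  equality for the point mass at \<open>\<mu>\<^sub>N\<close>. So the inner infimum of the DOO equation is
  \<open>v\<^sub>M(y, \<mu>\<^sub>N)\<close>, and \<open>v\<^sub>M\<close> solves the DOO equation as well.
\<close>

lemma jensens_inequality_closed_convex:
  fixes f :: "'b::euclidean_space \<Rightarrow> real" and Q :: "'b measure"
  assumes C: "closed C" and f: "convex_on C f" "continuous_on C f"
    and Q: "prob_space Q" "measure Q C = 1" "integrable Q (\<lambda>x. x)" "integrable Q f"
  shows "f (\<integral>x. x \<partial>Q) \<le> (\<integral>x. f x \<partial>Q)"
proof (rule ccontr)
  interpret prob_space Q by fact
  define m where "m = (\<integral>x. x \<partial>Q)"
  define I where "I = (\<integral>x. f x \<partial>Q)"
  assume "\<not> f m \<le> I"
  then have "(m, I) \<notin> epigraph C f" by (simp add: mem_epigraph)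
  moreover have "continuous_on (C \<times> UNIV) (\<lambda>p. f (fst p) - snd p)"
    by (intro continuous_intros continuous_on_compose2[OF f(2)]) auto
  then have "closed ((C \<times> UNIV) \<inter> (\<lambda>p. f (fst p) - snd p) -` {..0})"
    by (intro continuous_closed_preimage closed_Times C) auto
  then have "closed (epigraph C f)"
    by (rule back_subst[of closed]) (auto simp: epigraph_def)
  ultimately obtain a b where ab: "inner a (m, I) < b" "\<forall>p\<in>epigraph C f. b < inner a p"
    using separating_hyperplane_closed_point convex_epigraphI[OF f(1)] by metis
  obtain a1 a2 where a: "a = (a1, a2)" by fastforce
  have "b < a1 \<bullet> x + a2 * f x" if "x \<in> C" for x
    using ab(2)[rule_format, of "(x, f x)"] that by (simp add: a mem_epigraph)
  moreover have "AE x in Q. x \<in> C" using Q(2) by (intro AE_prob_1) simp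
  ultimately have "(\<integral>x. b \<partial>Q) \<le> (\<integral>x. a1 \<bullet> x + a2 * f x \<partial>Q)"
    using Q(3,4) by (intro integral_mono_AE) (auto elim!: eventually_mono intro: less_imp_le)
  also have "\<dots> = a1 \<bullet> m + a2 * I"
    using Q(3,4) by (simp add: m_def I_def)
  finally show False using ab(1) by (simp add: a prob_space)
qed

lemma abs_INF_diff_le:
  fixes a b :: "'c \<Rightarrow> real"
  assumes "S \<noteq> {}" "bdd_below (a ` S)" "bdd_below (b ` S)" "\<forall>s\<in>S. \<bar>a s - b s\<bar> \<le> d"
  shows "\<bar>(INF s\<in>S. a s) - (INF s\<in>S. b s)\<bar> \<le> d"
proof -
  have "(INF s\<in>S. f s) - d \<le> (INF s\<in>S. g s)"
    if f: "bdd_below (f ` S)" and fg: "\<forall>s\<in>S. \<bar>f s - g s\<bar> \<le> d" for f g :: "'c \<Rightarrow> real"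
  proof (rule cINF_greatest[OF \<open>S \<noteq> {}\<close>])
    fix s assume "s \<in> S"
    then show "(INF s\<in>S. f s) - d \<le> g s" using cINF_lower[OF f] fg by force
  qed
  from this[of a b] this[of b a] show ?thesis using assms by (force simp: abs_minus_commute)
qed

text \<open>Contraction for the sup norm on \<open>D\<close>, phrased through uniform bounds \<open>c\<close> so that it
  applies to arbitrary functions bounded on \<open>D\<close> without a normed space of such functions.\<close>

definition sup_contraction_on :: "'p set \<Rightarrow> real \<Rightarrow> (('p \<Rightarrow> real) \<Rightarrow> ('p \<Rightarrow> real)) \<Rightarrow> bool" where
  "sup_contraction_on D \<beta> T \<longleftrightarrow>
     (\<forall>f h c. bounded (f ` D) \<and> bounded (h ` D) \<and> (\<forall>q\<in>D. \<bar>f q - h q\<bar> \<le> c) \<longrightarrow>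
        (\<forall>q\<in>D. \<bar>T f q - T h q\<bar> \<le> \<beta> * c))"

lemma sup_contraction_onD:
  "sup_contraction_on D \<beta> T \<Longrightarrow> bounded (f ` D) \<Longrightarrow> bounded (h ` D) \<Longrightarrow>
    (\<And>q. q \<in> D \<Longrightarrow> \<bar>f q - h q\<bar> \<le> c) \<Longrightarrow> q \<in> D \<Longrightarrow> \<bar>T f q - T h q\<bar> \<le> \<beta> * c"
  unfolding sup_contraction_on_def by blast

lemma sup_contraction_on_B_M:
  fixes \<phi> :: "'a \<times> 'a \<times> 'b \<Rightarrow> real"
  assumes Y: "\<forall>p\<in>X \<times> \<Xi>. Y p \<noteq> {} \<and> Y p \<subseteq> X" and \<mu>: "\<mu> \<in> \<Xi>"
    and \<phi>: "bounded (\<phi> ` (X \<times> X \<times> \<Xi>))" and \<beta>: "0 \<le> \<beta>"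
  shows "sup_contraction_on (X \<times> \<Xi>) \<beta> (B_M X \<Xi> Y \<phi> \<beta> \<mu>)"
  unfolding sup_contraction_on_def
proof (intro allI impI ballI)
  fix f h :: "'a \<times> 'b \<Rightarrow> real" and c q
  assume fh: "bounded (f ` (X \<times> \<Xi>)) \<and> bounded (h ` (X \<times> \<Xi>)) \<and> (\<forall>q\<in>X \<times> \<Xi>. \<bar>f q - h q\<bar> \<le> c)"
    and "q \<in> X \<times> \<Xi>"
  then obtain x \<xi> where q: "q = (x, \<xi>)" "x \<in> X" "\<xi> \<in> \<Xi>" by blast
  obtain K where K: "\<forall>z\<in>X \<times> X \<times> \<Xi>. \<bar>\<phi> z\<bar> \<le> K" using \<phi> unfolding bounded_real by blast
  have bdd: "bdd_below ((\<lambda>y. \<phi> (x, y, \<xi>) + \<beta> * g (y, \<mu>)) ` Y (x, \<xi>))"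
    if g: "bounded (g ` (X \<times> \<Xi>))" for g :: "'a \<times> 'b \<Rightarrow> real"
  proof -
    obtain L where L: "\<forall>z\<in>X \<times> \<Xi>. \<bar>g z\<bar> \<le> L" using g unfolding bounded_real by blast
    have "- K - \<beta> * L \<le> \<phi> (x, y, \<xi>) + \<beta> * g (y, \<mu>)" if "y \<in> Y (x, \<xi>)" for y
    proof -
      have y: "y \<in> X" using Y q that by blast
      have "- K \<le> \<phi> (x, y, \<xi>)" using K y q by force
      moreover have "\<beta> * (- L) \<le> \<beta> * g (y, \<mu>)" using L y \<mu> \<beta> by (intro mult_left_mono) force+
      ultimately show ?thesis by simp
    qed
    then show ?thesis by (rule bdd_belowI2)
  qed
  have "\<bar>\<phi> (x, y, \<xi>) + \<beta> * f (y, \<mu>) - (\<phi> (x, y, \<xi>) + \<beta> * h (y, \<mu>))\<bar> \<le> \<beta> * c"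
    if "y \<in> Y (x, \<xi>)" for y
  proof -
    have "(y, \<mu>) \<in> X \<times> \<Xi>" using Y q that \<mu> by blast
    then have "\<beta> * \<bar>f (y, \<mu>) - h (y, \<mu>)\<bar> \<le> \<beta> * c" using fh \<beta> by (intro mult_left_mono) auto
    then show ?thesis using \<beta> by (simp add: abs_mult flip: right_diff_distrib)
  qed
  then show "\<bar>B_M X \<Xi> Y \<phi> \<beta> \<mu> f q - B_M X \<Xi> Y \<phi> \<beta> \<mu> h q\<bar> \<le> \<beta> * c"
    using Y q fh by (auto simp: B_M_def intro!: abs_INF_diff_le bdd)
qed

lemma B_M_fixed_point_iff:
  "(\<forall>q\<in>X \<times> \<Xi>. B_M X \<Xi> Y \<phi> \<beta> \<mu> f q = f q) \<longleftrightarrow>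
    (\<forall>x\<in>X. \<forall>\<xi>\<in>\<Xi>. f (x, \<xi>) = (INF y\<in>Y (x, \<xi>). \<phi> (x, y, \<xi>) + \<beta> * f (y, \<mu>)))"
  unfolding split_paired_Ball_Sigma by (intro ball_cong refl) (simp add: B_M_def eq_commute)

lemma uniform_limit_of_geometric_increments:
  fixes fs :: "nat \<Rightarrow> 'a \<Rightarrow> 'b::banach"
  assumes steps: "\<And>n x. norm (fs (Suc n) x - fs n x) \<le> \<beta> ^ n * C" and \<beta>: "0 \<le> \<beta>" "\<beta> < 1"
  obtains g where "uniform_limit UNIV fs g sequentially"
proof
  have "uniform_limit UNIV (\<lambda>n x. \<Sum>i<n. fs (Suc i) x - fs i x)
      (\<lambda>x. \<Sum>i. fs (Suc i) x - fs i x) sequentially"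
    using steps \<beta> by (intro Weierstrass_m_test[where M="\<lambda>n. \<beta> ^ n * C"])
      (auto intro: summable_mult2 summable_geometric)
  moreover have "fs 0 x + (\<Sum>i<n. fs (Suc i) x - fs i x) = fs n x" for n x
    using sum_lessThan_telescope[of "\<lambda>i. fs i x" n] by simp
  ultimately show "uniform_limit UNIV fs (\<lambda>x. fs 0 x + (\<Sum>i. fs (Suc i) x - fs i x)) sequentially"
    using uniform_limit_add[OF uniform_limit_const[where c="fs 0"]] by fastforce
qed

lemma uniform_limit_in_Cb:
  assumes fs: "\<And>n. fs n \<in> Cb D" and ul: "uniform_limit UNIV fs g sequentially"
  shows "g \<in> Cb D"
proof -
  have ulD: "uniform_limit D fs g sequentially" using ul by (rule uniform_limit_on_subset) simp
  have "continuous_on D g"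
    using fs by (intro uniform_limit_theorem[OF _ ulD]) (auto simp: Cb_def)
  moreover have "bounded (g ` D)"
  proof -
    obtain n where n: "\<forall>q\<in>D. dist (fs n q) (g q) < 1"
      using uniform_limitD[OF ulD, of 1] eventually_sequentially by auto
    obtain a where a: "\<forall>q\<in>D. \<bar>fs n q\<bar> \<le> a" using fs[of n] by (auto simp: Cb_def bounded_real)
    have "\<bar>g q\<bar> \<le> a + 1" if "q \<in> D" for q
      using n a that by (force simp: dist_real_def)
    then show ?thesis unfolding bounded_real by blast
  qed
  moreover have "g q = 0" if "q \<notin> D" for q
  proof (rule LIMSEQ_unique)
    show "(\<lambda>n. fs n q) \<longlonglongrightarrow> g q" using ul by (rule tendsto_uniform_limitI) simp
    show "(\<lambda>n. fs n q) \<longlonglongrightarrow> 0" using fs that by (simp add: Cb_def)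
  qed
  ultimately show ?thesis by (simp add: Cb_def)
qed

lemma sup_contraction_on_uniform_limit:
  assumes T: "sup_contraction_on D \<beta> T" and \<beta>: "0 \<le> \<beta>"
    and bounded: "\<And>n. bounded (fs n ` D)" "bounded (g ` D)"
    and ul: "uniform_limit D fs g sequentially"
  shows "uniform_limit D (\<lambda>n. T (fs n)) (T g) sequentially"
proof (rule uniform_limitI)
  fix e :: real assume "0 < e"
  then have "\<forall>\<^sub>F n in sequentially. \<forall>q\<in>D. dist (fs n q) (g q) < e / (\<beta> + 1)"
    using \<beta> by (intro uniform_limitD[OF ul]) simp
  then show "\<forall>\<^sub>F n in sequentially. \<forall>q\<in>D. dist (T (fs n) q) (T g q) < e"
  proof (rule eventually_mono, intro ballI)
    fix n q assume "\<forall>q\<in>D. dist (fs n q) (g q) < e / (\<beta> + 1)" and "q \<in> D"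
    then have "\<bar>T (fs n) q - T g q\<bar> \<le> \<beta> * (e / (\<beta> + 1))"
      by (intro sup_contraction_onD[OF T bounded]) (auto simp: dist_real_def)
    also have "\<dots> < e" using \<open>0 < e\<close> \<beta> by (simp add: field_simps)
    finally show "dist (T (fs n) q) (T g q) < e" by (simp add: dist_real_def)
  qed
qed

lemma sup_contraction_on_limit_of_iterates:
  assumes T: "sup_contraction_on D \<beta> T" and \<beta>: "0 \<le> \<beta>"
    and iterate: "\<And>n. fs (Suc n) = T (fs n)"
    and bounded: "\<And>n. bounded (fs n ` D)" "bounded (g ` D)"
    and ul: "uniform_limit D fs g sequentially" and "q \<in> D"
  shows "T g q = g q"
proof (rule LIMSEQ_unique)
  have "uniform_limit D (\<lambda>n. fs (Suc n)) (T g) sequentially"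
    unfolding iterate by (rule sup_contraction_on_uniform_limit[OF T \<beta> bounded ul])
  then show "(\<lambda>n. fs (Suc n) q) \<longlonglongrightarrow> T g q" using \<open>q \<in> D\<close> by (rule tendsto_uniform_limitI)
  show "(\<lambda>n. fs (Suc n) q) \<longlonglongrightarrow> g q"
    using LIMSEQ_Suc[OF tendsto_uniform_limitI[OF ul \<open>q \<in> D\<close>]] .
qed

lemma sup_contraction_on_iterate_increments:
  assumes T: "sup_contraction_on D \<beta> T" and \<beta>: "0 \<le> \<beta>" and Cb: "\<And>n. (T ^^ n) f \<in> Cb D"
  obtains C where "\<And>n q. \<bar>(T ^^ Suc n) f q - (T ^^ n) f q\<bar> \<le> \<beta> ^ n * C"
proof -
  have bounded: "bounded ((T ^^ n) f ` D)" for n using Cb by (simp add: Cb_def)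
  have "bounded ((\<lambda>q. (T ^^ 1) f q - (T ^^ 0) f q) ` D)"
    by (intro bounded_minus_comp bounded)
  then obtain C where C: "\<forall>q\<in>D. \<bar>(T ^^ 1) f q - (T ^^ 0) f q\<bar> \<le> C"
    unfolding bounded_real by blast
  have "\<bar>(T ^^ Suc n) f q - (T ^^ n) f q\<bar> \<le> \<beta> ^ n * \<bar>C\<bar>" for n q
  proof (cases "q \<in> D")
    case True
    then show ?thesis
    proof (induction n arbitrary: q)
      case (Suc n)
      then show ?case using sup_contraction_onD[OF T bounded bounded Suc.IH Suc.prems] by simp
    qed (use C abs_ge_self[of C] in force)
  next
    case False
    then show ?thesis using Cb[of n] Cb[of "Suc n"] \<beta> by (simp add: Cb_def)
  qed
  then show ?thesis by (rule that)
qed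

lemma sup_contraction_on_has_fixed_point:
  assumes T: "sup_contraction_on D \<beta> T" and \<beta>: "0 \<le> \<beta>" "\<beta> < 1"
    and F: "F \<noteq> {}" "closed_Cb D F" "T ` F \<subseteq> F"
  obtains g where "g \<in> F" "T g = g"
proof -
  have FCb: "F \<subseteq> Cb D" using F(2) by (simp add: closed_Cb_def)
  obtain f where "f \<in> F" using F(1) by blast
  define fs where "fs n = (T ^^ n) f" for n
  have fsF: "fs n \<in> F" for n
    unfolding fs_def by (induction n) (use \<open>f \<in> F\<close> F(3) in auto)
  then have fsCb: "fs n \<in> Cb D" for n using FCb by blast
  obtain C where "\<And>n q. \<bar>fs (Suc n) q - fs n q\<bar> \<le> \<beta> ^ n * C"
    using sup_contraction_on_iterate_increments[OF T \<beta>(1)] fsCb unfolding fs_def by blast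
  then obtain g where ul: "uniform_limit UNIV fs g sequentially"
    using uniform_limit_of_geometric_increments[of fs] \<beta> by (metis real_norm_def)
  then have ulD: "uniform_limit D fs g sequentially" by (rule uniform_limit_on_subset) simp
  have gCb: "g \<in> Cb D" using fsCb ul by (rule uniform_limit_in_Cb)
  then have "g \<in> F" using F(2) fsF ulD by (auto simp: closed_Cb_def)
  then have TgCb: "T g \<in> Cb D" using F(3) FCb by blast
  have "T g q = g q" for q
  proof (cases "q \<in> D")
    case True
    then show ?thesis
      using sup_contraction_on_limit_of_iterates[OF T \<beta>(1) _ _ _ ulD] fsCb gCb
      by (simp add: fs_def Cb_def)
  next
    case False
    then show ?thesis using gCb TgCb by (simp add: Cb_def)
  qed
  then show ?thesis using \<open>g \<in> F\<close> that by blast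
qed

lemma sup_contraction_on_fixed_point_unique:
  assumes T: "sup_contraction_on D \<beta> T" and \<beta>: "\<beta> < 1"
    and bounded: "bounded (w ` D)" "bounded (g ` D)"
    and fixed: "\<forall>q\<in>D. T w q = w q" "\<forall>q\<in>D. T g q = g q"
    and "q \<in> D"
  shows "w q = g q"
proof -
  define c where "c = (SUP q\<in>D. \<bar>w q - g q\<bar>)"
  obtain aw ag where "\<forall>q\<in>D. \<bar>w q\<bar> \<le> aw" "\<forall>q\<in>D. \<bar>g q\<bar> \<le> ag"
    using bounded unfolding bounded_real by (metis image_eqI)
  then have "bdd_above ((\<lambda>q. \<bar>w q - g q\<bar>) ` D)"
    by (intro bdd_aboveI2[where M="aw + ag"]) force
  then have dist_le: "\<bar>w p - g p\<bar> \<le> c" if "p \<in> D" for p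
    unfolding c_def by (rule cSUP_upper[OF that])
  have "\<bar>w p - g p\<bar> \<le> \<beta> * c" if "p \<in> D" for p
    using sup_contraction_onD[OF T bounded dist_le that] fixed that by simp
  then have "c \<le> \<beta> * c"
    unfolding c_def using \<open>q \<in> D\<close> by (intro cSUP_least) (auto simp: c_def)
  moreover have "0 \<le> c" using dist_le[OF \<open>q \<in> D\<close>] by linarith
  ultimately have "c = 0" using \<beta> by (auto simp: mult_le_cancel_right1)
  then show ?thesis using dist_le[OF \<open>q \<in> D\<close>] by simp
qed

lemma Cb_section:
  assumes "v \<in> Cb (X \<times> \<Xi>)" "y \<in> X"
  shows "(\<lambda>\<zeta>. v (y, \<zeta>)) \<in> Cb \<Xi>"
proof -
  have v: "continuous_on (X \<times> \<Xi>) v" "bounded (v ` (X \<times> \<Xi>))" "\<forall>p. p \<notin> X \<times> \<Xi> \<longrightarrow> v p = 0"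
    using assms(1) by (simp_all add: Cb_def)
  have "continuous_on \<Xi> (\<lambda>\<zeta>. v (y, \<zeta>))"
    by (rule continuous_on_compose2[OF v(1) continuous_on_Pair[OF continuous_on_const continuous_on_id]])
      (use assms(2) in auto)
  moreover have "bounded ((\<lambda>\<zeta>. v (y, \<zeta>)) ` \<Xi>)"
    by (rule bounded_subset[OF v(2)]) (use assms(2) in auto)
  ultimately show ?thesis using v(3) assms(2) by (simp add: Cb_def)
qed

lemma INF_integral_eq_at_common_mean:
  fixes h :: "'b::euclidean_space \<Rightarrow> real" and \<P> :: "'b measure set"
  assumes \<Xi>: "closed \<Xi>" and "h \<in> Cb \<Xi>" "convex_on \<Xi> h"
    and \<P>: "\<forall>Q\<in>\<P>. prob_space Q \<and> sets Q = sets borel \<and> measure Q \<Xi> = 1 \<and>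
              integrable Q (\<lambda>\<xi>. \<xi>) \<and> (\<integral>\<xi>. \<xi> \<partial>Q) = \<mu>"
      "return borel \<mu> \<in> \<P>"
  shows "(INF Q\<in>\<P>. \<integral>\<zeta>. h \<zeta> \<partial>Q) = h \<mu>"
proof -
  have h: "convex_on \<Xi> h" "continuous_on \<Xi> h" "bounded (h ` \<Xi>)" "\<forall>\<zeta>. \<zeta> \<notin> \<Xi> \<longrightarrow> h \<zeta> = 0"
    using assms(2,3) unfolding Cb_def by simp_all
  have "(\<lambda>\<zeta>. indicator \<Xi> \<zeta> *\<^sub>R h \<zeta>) = h" using h(4) by (auto simp: indicator_def fun_eq_iff)
  then have h_borel: "h \<in> borel_measurable borel"
    using borel_measurable_continuous_on_indicator[OF _ h(2)] \<Xi> by simp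
  obtain K where "\<forall>\<zeta>\<in>\<Xi>. \<bar>h \<zeta>\<bar> \<le> K" using h(3) unfolding bounded_real by blast
  then have K: "\<bar>h \<zeta>\<bar> \<le> \<bar>K\<bar>" for \<zeta> using h(4) by (cases "\<zeta> \<in> \<Xi>") force+
  have Jensen: "h \<mu> \<le> (\<integral>\<zeta>. h \<zeta> \<partial>Q)" if "Q \<in> \<P>" for Q
  proof -
    have Q: "prob_space Q" "sets Q = sets borel" "measure Q \<Xi> = 1" "integrable Q (\<lambda>\<xi>. \<xi>)"
      "(\<integral>\<xi>. \<xi> \<partial>Q) = \<mu>" using \<P>(1) that by auto
    have "integrable Q h"
      using h_borel K prob_space.finite_measure[OF Q(1)] measurable_cong_sets[OF Q(2) refl]
      by (intro finite_measure.integrable_const_bound[where B="\<bar>K\<bar>"]) auto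
    then show ?thesis using jensens_inequality_closed_convex[OF \<Xi> h(1,2) Q(1,3,4)] Q(5) by simp
  qed
  moreover have "(\<integral>\<zeta>. h \<zeta> \<partial>return borel \<mu>) = h \<mu>"
    using h_borel by (intro integral_return) auto
  moreover have "bdd_below ((\<lambda>Q. \<integral>\<zeta>. h \<zeta> \<partial>Q) ` \<P>)"
    using Jensen by (rule bdd_belowI2)
  ultimately have "(INF Q\<in>\<P>. \<integral>\<zeta>. h \<zeta> \<partial>Q) \<le> h \<mu>"
    using cINF_lower[OF _ \<P>(2)] by metis
  moreover have "h \<mu> \<le> (INF Q\<in>\<P>. \<integral>\<zeta>. h \<zeta> \<partial>Q)"
    using \<P>(2) Jensen by (intro cINF_greatest) auto
  ultimately show ?thesis by (rule antisym)
qed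

lemma MPC_solution_solves_DOO:
  fixes v :: "'a::metric_space \<times> 'b::euclidean_space \<Rightarrow> real"
  assumes \<Xi>: "closed \<Xi>" and v: "v \<in> Cb (X \<times> \<Xi>)" "\<forall>y\<in>X. convex_on \<Xi> (\<lambda>\<zeta>. v (y, \<zeta>))"
    and Y: "\<forall>p\<in>X \<times> \<Xi>. Y p \<subseteq> X"
    and \<P>: "\<forall>Q\<in>\<P>. prob_space Q \<and> sets Q = sets borel \<and> measure Q \<Xi> = 1 \<and>
              integrable Q (\<lambda>\<xi>. \<xi>) \<and> (\<integral>\<xi>. \<xi> \<partial>Q) = \<mu>"
      "return borel \<mu> \<in> \<P>"
    and MPC: "\<forall>x\<in>X. \<forall>\<xi>\<in>\<Xi>. v (x, \<xi>) = (INF y\<in>Y (x, \<xi>). \<phi> (x, y, \<xi>) + \<beta> * v (y, \<mu>))"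
  shows "\<forall>x\<in>X. \<forall>\<xi>\<in>\<Xi>. v (x, \<xi>) =
    (INF y\<in>Y (x, \<xi>). \<phi> (x, y, \<xi>) + \<beta> * (INF Q\<in>\<P>. \<integral>\<zeta>. v (y, \<zeta>) \<partial>Q))"
proof (intro ballI)
  have worst_case: "(INF Q\<in>\<P>. \<integral>\<zeta>. v (y, \<zeta>) \<partial>Q) = v (y, \<mu>)" if "y \<in> X" for y
    using v(2) that by (intro INF_integral_eq_at_common_mean[OF \<Xi> Cb_section[OF v(1) that] _ \<P>]) blast
  fix x \<xi> assume "x \<in> X" "\<xi> \<in> \<Xi>"
  then have "Y (x, \<xi>) \<subseteq> X" using Y by blast
  have "v (x, \<xi>) = (INF y\<in>Y (x, \<xi>). \<phi> (x, y, \<xi>) + \<beta> * v (y, \<mu>))"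
    using MPC \<open>x \<in> X\<close> \<open>\<xi> \<in> \<Xi>\<close> by blast
  also have "\<dots> = (INF y\<in>Y (x, \<xi>). \<phi> (x, y, \<xi>) + \<beta> * (INF Q\<in>\<P>. \<integral>\<zeta>. v (y, \<zeta>) \<partial>Q))"
    using \<open>Y (x, \<xi>) \<subseteq> X\<close> worst_case by (intro INF_cong) auto
  finally show "v (x, \<xi>) = \<dots>" .
qed

theorem corollary1:
  fixes X :: "'a::euclidean_space set" and \<Xi> :: "'b::euclidean_space set"
    and \<beta> :: real and \<phi> :: "'a \<times> 'a \<times> 'b \<Rightarrow> real" and Y :: "'a \<times> 'b \<Rightarrow> 'a set"
    and N :: nat and \<xi>s :: "nat \<Rightarrow> 'b" and \<mu> :: 'b and \<P> :: "'b measure set"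
  assumes X: "closed X" "convex X"
    and \<Xi>: "closed \<Xi>" "convex \<Xi>"
    and \<beta>: "0 < \<beta>" "\<beta> < 1"
    and \<phi>: "continuous_on (X \<times> X \<times> \<Xi>) \<phi>" "bounded (\<phi> ` (X \<times> X \<times> \<Xi>))"
    and Y: "\<forall>p\<in>X \<times> \<Xi>. Y p \<noteq> {} \<and> compact (Y p) \<and> Y p \<subseteq> X"
      "continuous_corr_on (X \<times> \<Xi>) Y"
    and N: "N \<ge> 1" "\<forall>i\<in>{1..N}. \<xi>s i \<in> \<Xi>"
    and \<mu>: "\<mu> = inverse (real N) *\<^sub>R (\<Sum>i=1..N. \<xi>s i)"
    and \<P>: "\<forall>Q\<in>\<P>. prob_space Q \<and> sets Q = sets borel \<and> measure Q \<Xi> = 1 \<and>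
              integrable Q (\<lambda>\<xi>. \<xi>) \<and> (\<integral>\<xi>. \<xi> \<partial>Q) = \<mu>"
      "return borel \<mu> \<in> \<P>"
    and cp: "convexity_preserving X \<Xi> Y \<phi> \<beta> \<mu>"
  shows "\<exists>v. continuous_on (X \<times> \<Xi>) v \<and> bounded (v ` (X \<times> \<Xi>)) \<and>
           (\<forall>p. p \<notin> X \<times> \<Xi> \<longrightarrow> v p = 0) \<and>
           (\<forall>x\<in>X. \<forall>\<xi>\<in>\<Xi>. v (x, \<xi>) = (INF y\<in>Y (x, \<xi>). \<phi> (x, y, \<xi>) + \<beta> * v (y, \<mu>))) \<and>
           (\<forall>x\<in>X. \<forall>\<xi>\<in>\<Xi>. v (x, \<xi>) =
               (INF y\<in>Y (x, \<xi>). \<phi> (x, y, \<xi>) + \<beta> * (INF Q\<in>\<P>. \<integral>\<zeta>. v (y, \<zeta>) \<partial>Q))) \<and>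
           (\<forall>w. continuous_on (X \<times> \<Xi>) w \<and> bounded (w ` (X \<times> \<Xi>)) \<and>
                (\<forall>x\<in>X. \<forall>\<xi>\<in>\<Xi>. w (x, \<xi>) = (INF y\<in>Y (x, \<xi>). \<phi> (x, y, \<xi>) + \<beta> * w (y, \<mu>)))
                \<longrightarrow> (\<forall>p\<in>X \<times> \<Xi>. w p = v p))"
proof -
  let ?B = "B_M X \<Xi> Y \<phi> \<beta> \<mu>"
  obtain F where F: "F \<noteq> {}" "closed_Cb (X \<times> \<Xi>) F" "\<forall>f\<in>F. \<forall>x\<in>X. convex_on \<Xi> (\<lambda>\<xi>. f (x, \<xi>))"
      "?B ` F \<subseteq> F"
    using cp unfolding convexity_preserving_def by blast
  have "measure (return borel \<mu>) \<Xi> = 1" using \<P> by blast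
  then have "\<mu> \<in> \<Xi>" using measure_return[of \<Xi> borel \<mu>] \<Xi>(1) by (auto split: split_indicator_asm)
  then have contraction: "sup_contraction_on (X \<times> \<Xi>) \<beta> ?B"
    using Y(1) \<phi>(2) \<beta>(1) by (intro sup_contraction_on_B_M) auto
  obtain v where "v \<in> F" "?B v = v"
    using sup_contraction_on_has_fixed_point[OF contraction _ \<beta>(2) F(1,2,4)] \<beta>(1) by auto
  then have v: "v \<in> Cb (X \<times> \<Xi>)" using F(2) by (auto simp: closed_Cb_def)
  then have v': "continuous_on (X \<times> \<Xi>) v" "bounded (v ` (X \<times> \<Xi>))" "\<forall>p. p \<notin> X \<times> \<Xi> \<longrightarrow> v p = 0"
    by (simp_all add: Cb_def)
  have MPC: "\<forall>x\<in>X. \<forall>\<xi>\<in>\<Xi>. v (x, \<xi>) = (INF y\<in>Y (x, \<xi>). \<phi> (x, y, \<xi>) + \<beta> * v (y, \<mu>))"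
    unfolding B_M_fixed_point_iff[symmetric] using \<open>?B v = v\<close> by simp
  have DOO: "\<forall>x\<in>X. \<forall>\<xi>\<in>\<Xi>. v (x, \<xi>) =
      (INF y\<in>Y (x, \<xi>). \<phi> (x, y, \<xi>) + \<beta> * (INF Q\<in>\<P>. \<integral>\<zeta>. v (y, \<zeta>) \<partial>Q))"
    using F(3) \<open>v \<in> F\<close> Y(1) by (intro MPC_solution_solves_DOO[OF \<Xi>(1) v _ _ \<P> MPC]) auto
  have unique: "\<forall>p\<in>X \<times> \<Xi>. w p = v p"
    if w: "bounded (w ` (X \<times> \<Xi>))"
      "\<forall>x\<in>X. \<forall>\<xi>\<in>\<Xi>. w (x, \<xi>) = (INF y\<in>Y (x, \<xi>). \<phi> (x, y, \<xi>) + \<beta> * w (y, \<mu>))"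
    for w
  proof
    fix p assume "p \<in> X \<times> \<Xi>"
    have "\<forall>q\<in>X \<times> \<Xi>. ?B w q = w q" unfolding B_M_fixed_point_iff by (rule w(2))
    moreover have "\<forall>q\<in>X \<times> \<Xi>. ?B v q = v q" using \<open>?B v = v\<close> by simp
    ultimately show "w p = v p"
      by (rule sup_contraction_on_fixed_point_unique[OF contraction \<beta>(2) w(1) v'(2) _ _ \<open>p \<in> _\<close>])
  qed
  show ?thesis
    by (rule exI[of _ v]) (intro conjI v' MPC DOO allI impI; elim conjE; rule unique)
qed

end
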